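(* Let $p_0,p_1,p_2,p_3\ge 0$ with $p_0+p_1+p_2+p_3=1$, and let $\Theta:\mathcal{L}(\mathbb{C}^2)\to\mathcal{L}(\mathbb{C}^2)$ be the mixed Pauli channel $\Theta(\rho)=p_0\,\rho+p_1\,\sigma_1\rho\sigma_1+p_2\,\sigma_2\rho\sigma_2+p_3\,\sigma_3\rho\sigma_3$, where $\sigma_1=\begin{pmatrix}0&1\\1&0\end{pmatrix}$, $\sigma_2=\begin{pmatrix}0&-i\\i&0\end{pmatrix}$, $\sigma_3=\begin{pmatrix}1&0\\0&-1\end{pmatrix}$. If at least three of $p_0,p_1,p_2,p_3$ are nonzero, then every channel complementary to $\Theta$ has positive coherent information.
   Context: A quantum channel $\Phi:\mathcal{L}(\mathcal{A})\to\mathcal{L}(\mathcal{B})$ (completely positive, trace-preserving, finite-dimensional spaces) can be written as $\Phi(\rho)=\operatorname{Tr}_{\mathcal{E}}(A\rho A^{\ast})$ for an isometry $A\in\mathcal{L}(\mathcal{A},\mathcal{B}\otimes\mathcal{E})$. For any such representation, the channel $\Psi:\mathcal{L}(\mathcal{A})\to\mathcal{L}(\mathcal{E})$ given by $\Psi(\rho)=\operatorname{Tr}_{\mathcal{B}}(A\rho A^{\ast})$ is called a complementary channel to $\Phi$. The coherent information of a state $\rho$ through $\Psi$ is $\operatorname{I}_{\mathrm{C}}(\rho;\Psi)=\operatorname{H}(\Psi(\rho))-\operatorname{H}(\Phi(\rho))$, with $\operatorname{H}(\sigma)=-\operatorname{Tr}(\sigma\log\sigma)$ the von Neumann entropy (independent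 of the choice of complementary channel), and the coherent information of $\Psi$ is $\operatorname{I}_{\mathrm{C}}(\Psi)=\max_{\rho}\operatorname{I}_{\mathrm{C}}(\rho;\Psi)$ over input density operators $\rho$. "Positive coherent information" means $\operatorname{I}_{\mathrm{C}}(\Psi)>0$. *)

theory Defs
  imports Complex_Main "Jordan_Normal_Form.Jordan_Normal_Form"
begin

definition sigma1 :: "complex mat" where
  "sigma1 = mat_of_rows_list 2 [[0, 1], [1, 0]]"
definition sigma2 :: "complex mat" where
  "sigma2 = mat_of_rows_list 2 [[0, - \<i>], [\<i>, 0]]"
definition sigma3 :: "complex mat" where
  "sigma3 = mat_of_rows_list 2 [[1, 0], [0, -1]]"

definition adj :: "complex mat \<Rightarrow> complex mat" where
  "adj A = mat (dim_col A) (dim_row A) (\<lambda>(i,j). cnj (A $$ (j,i)))"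

definition tr :: "complex mat \<Rightarrow> complex" where
  "tr A = (\<Sum>i<dim_row A. A $$ (i,i))"

definition density :: "nat \<Rightarrow> complex mat \<Rightarrow> bool" where
  "density n \<rho> \<longleftrightarrow> \<rho> \<in> carrier_mat n n \<and> adj \<rho> = \<rho> \<and>
     (\<forall>v :: nat \<Rightarrow> complex. 0 \<le> Re (\<Sum>i<n. \<Sum>j<n. cnj (v i) * \<rho> $$ (i,j) * v j)) \<and>
     tr \<rho> = 1"

definition pauli_channel :: "real \<Rightarrow> real \<Rightarrow> real \<Rightarrow> real \<Rightarrow> complex mat \<Rightarrow> complex mat" where
  "pauli_channel p0 p1 p2 p3 \<rho> =
     complex_of_real p0 \<cdot>\<^sub>m \<rho> + complex_of_real p1 \<cdot>\<^sub>m (sigma1 * \<rho> * sigma1)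
     + complex_of_real p2 \<cdot>\<^sub>m (sigma2 * \<rho> * sigma2) + complex_of_real p3 \<cdot>\<^sub>m (sigma3 * \<rho> * sigma3)"

(* C^b \<otimes> C^e is identified with C^(b*e) via (i,k) \<mapsto> i*e + k *)
definition ptrace_E :: "nat \<Rightarrow> nat \<Rightarrow> complex mat \<Rightarrow> complex mat" where
  "ptrace_E b e M = mat b b (\<lambda>(i,j). \<Sum>k<e. M $$ (i*e+k, j*e+k))"
definition ptrace_B :: "nat \<Rightarrow> nat \<Rightarrow> complex mat \<Rightarrow> complex mat" where
  "ptrace_B b e M = mat e e (\<lambda>(k,l). \<Sum>i<b. M $$ (i*e+k, i*e+l))"

definition complementary :: "nat \<Rightarrow> nat \<Rightarrow> nat \<Rightarrow> (complex mat \<Rightarrow> complex mat)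
    \<Rightarrow> (complex mat \<Rightarrow> complex mat) \<Rightarrow> bool" where
  "complementary a b e \<Phi> \<Psi> \<longleftrightarrow> (\<exists>A. A \<in> carrier_mat (b*e) a \<and> adj A * A = 1\<^sub>m a \<and>
     (\<forall>\<rho> \<in> carrier_mat a a. \<Phi> \<rho> = ptrace_E b e (A * \<rho> * adj A) \<and>
                              \<Psi> \<rho> = ptrace_B b e (A * \<rho> * adj A)))"

(* von Neumann entropy -Tr(s log s) = - sum of lambda ln lambda over eigenvalues
   (with multiplicity, 0 ln 0 = 0) *)
definition entropy :: "complex mat \<Rightarrow> real" where
  "entropy \<sigma> = - (\<Sum>x\<in>{x. poly (char_poly \<sigma>) x = 0}.
       real (order x (char_poly \<sigma>)) * (if Re x \<le> 0 then 0 else Re x * ln (Re x)))"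

definition coh_info_state :: "(complex mat \<Rightarrow> complex mat) \<Rightarrow> (complex mat \<Rightarrow> complex mat)
    \<Rightarrow> complex mat \<Rightarrow> real" where
  "coh_info_state \<Phi> \<Psi> \<rho> = entropy (\<Psi> \<rho>) - entropy (\<Phi> \<rho>)"

(* I_C(Psi) = max over density operators on C^a (the max exists; Sup = max) *)
definition coh_info :: "nat \<Rightarrow> (complex mat \<Rightarrow> complex mat) \<Rightarrow> (complex mat \<Rightarrow> complex mat) \<Rightarrow> real" where
  "coh_info a \<Phi> \<Psi> = Sup (coh_info_state \<Phi> \<Psi> ` {\<rho>. density a \<rho>})"

end

theory Submission
  imports Defs
begin

text \<open>Write \<open>u = p\<^sub>0 + p\<^sub>3\<close> and \<open>v = p\<^sub>1 + p\<^sub>2\<close>. Splitting a Stinespring isometry into its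
  two blocks gives \<open>\<Psi>(\<rho>) = G (1 \<otimes> \<rho>) G\<^sup>*\<close>, where the Gram matrix \<open>G\<^sup>* G\<close> is determined by
  \<open>\<Theta>\<close> alone; since \<open>GH\<close> and \<open>HG\<close> have the same nonzero spectrum, the entropy of
  \<open>\<Psi>(\<rho>)\<close> does not depend on the choice of the complementary channel. For
  \<open>\<rho> = diag(1 - \<beta>, \<beta>)\<close> the output \<open>\<Theta>(\<rho>)\<close> has eigenvalues \<open>u(1 - \<beta>) + v\<beta>\<close> and
  \<open>u\<beta> + v(1 - \<beta>)\<close>, while the nonzero eigenvalues of \<open>\<Psi>(\<rho>)\<close> are the roots of
  \<open>X\<^sup>2 - uX + 4\<beta>(1 - \<beta>)p\<^sub>0p\<^sub>3\<close> and \<open>X\<^sup>2 - vX + 4\<beta>(1 - \<beta>)p\<^sub>1p\<^sub>2\<close>. At \<open>\<beta> = 0\<close> both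
  entropies equal \<open>h(u)\<close>. If three weights are nonzero then \<open>u, v > 0\<close> and one of
  \<open>p\<^sub>0p\<^sub>3, p\<^sub>1p\<^sub>2\<close> is positive, so for small \<open>\<beta>\<close> the entropy of \<open>\<Psi>(\<rho>)\<close> grows like
  \<open>\<beta> ln(1/\<beta>)\<close> while that of \<open>\<Theta>(\<rho>)\<close> moves only by \<open>O(\<beta>)\<close>.\<close>

section \<open>Characteristic polynomials\<close>

lemma det_2x2:
  assumes "(M :: 'a :: comm_ring_1 mat) \<in> carrier_mat 2 2"
  shows "det M = M $$ (0,0) * M $$ (1,1) - M $$ (0,1) * M $$ (1,0)"
proof -
  have "det M = (\<Sum>i<2. M $$ (i,0) * cofactor M i 0)"
    by (rule laplace_expansion_column[OF assms]) auto
  also have "\<dots> = M $$ (0,0) * M $$ (1,1) - M $$ (0,1) * M $$ (1,0)"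
    using assms by (simp add: numeral_2_eq_2 cofactor_def det_single mat_delete_def lessThan_Suc)
  finally show ?thesis .
qed

lemma char_poly_2x2:
  assumes "(M :: 'a :: comm_ring_1 mat) \<in> carrier_mat 2 2"
  shows "char_poly M =
    [: M $$ (0,0) * M $$ (1,1) - M $$ (0,1) * M $$ (1,0), - (M $$ (0,0) + M $$ (1,1)), 1 :]"
  unfolding char_poly_def using assms by (subst det_2x2) (simp_all add: char_poly_matrix_def)

lemma char_poly_four_block_diag:
  fixes A :: "'a :: idom mat"
  assumes A: "A \<in> carrier_mat n n" and B: "B \<in> carrier_mat m m"
  shows "char_poly (four_block_mat A (0\<^sub>m n m) (0\<^sub>m m n) B) = char_poly A * char_poly B"
proof -
  let ?cm = "\<lambda>M. [:0, 1:] \<cdot>\<^sub>m 1\<^sub>m (dim_row M) + map_mat (\<lambda>a. [:- a:]) M"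
  have "?cm (four_block_mat A (0\<^sub>m n m) (0\<^sub>m m n) B)
      = four_block_mat (?cm A) (0\<^sub>m n m) (0\<^sub>m m n) (?cm B)"
    by (rule eq_matI) (use A B in \<open>auto simp: one_poly_def\<close>)
  moreover have "det \<dots> = det (?cm A) * det (?cm B)"
    by (rule det_four_block_mat_lower_left_zero) (use A B in auto)
  ultimately show ?thesis
    unfolding char_poly_defs using A B by simp
qed

lemma char_poly_matrix_eq:
  assumes "A \<in> carrier_mat n n"
  shows "char_poly_matrix A = [:0,1:] \<cdot>\<^sub>m 1\<^sub>m n - map_mat (\<lambda>a. [:a:]) A"
  by (rule eq_matI) (use assms in \<open>auto simp: char_poly_matrix_def\<close>)

text \<open>Sylvester's determinant identity, \<open>X\<^sup>m \<chi>\<^sub>G\<^sub>H = X\<^sup>n \<chi>\<^sub>H\<^sub>G\<close>, is read off the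
  determinant of the following block matrix, by clearing either off-diagonal block.\<close>

definition sylvester_block :: "'a :: comm_ring_1 mat \<Rightarrow> 'a mat \<Rightarrow> 'a poly mat" where
  "sylvester_block G H = four_block_mat ([:0,1:] \<cdot>\<^sub>m 1\<^sub>m (dim_row G))
     (map_mat (\<lambda>a. [:a:]) G) (map_mat (\<lambda>a. [:a:]) H) (1\<^sub>m (dim_row H))"

lemma det_sylvester_block_left:
  fixes G :: "'a :: idom mat"
  assumes G: "G \<in> carrier_mat n m" and H: "H \<in> carrier_mat m n"
  shows "det (sylvester_block G H) = char_poly (G * H)"
proof -
  let ?C = "map_mat (\<lambda>a. [:a:])" and ?X = "[:0,1::'a:]"
  have CG: "?C G \<in> carrier_mat n m" and CH: "?C H \<in> carrier_mat m n" using G H by auto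
  have S: "sylvester_block G H = four_block_mat (?X \<cdot>\<^sub>m 1\<^sub>m n) (?C G) (?C H) (1\<^sub>m m)"
    using G H by (simp add: sylvester_block_def)
  define L where "L = four_block_mat (1\<^sub>m n) (- ?C G) (0\<^sub>m m n) (1\<^sub>m m)"
  have L: "L \<in> carrier_mat (n+m) (n+m)" using CG by (simp add: L_def)
  have "L * sylvester_block G H = four_block_mat (1\<^sub>m n * (?X \<cdot>\<^sub>m 1\<^sub>m n) + (- ?C G) * ?C H)
      (1\<^sub>m n * ?C G + (- ?C G) * 1\<^sub>m m) (0\<^sub>m m n * (?X \<cdot>\<^sub>m 1\<^sub>m n) + 1\<^sub>m m * ?C H)
      (0\<^sub>m m n * ?C G + 1\<^sub>m m * 1\<^sub>m m)"
    unfolding L_def S using G H by (intro mult_four_block_mat) auto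
  also have "\<dots> = four_block_mat (char_poly_matrix (G * H)) (0\<^sub>m n m) (?C H) (1\<^sub>m m)"
    using CG CH G H
    by (simp add: char_poly_matrix_eq[of "G * H" n] map_poly_mult(1)[OF G H]
        add_uminus_minus_mat[of _ n n] add_uminus_minus_mat[OF CG CG])
  finally have LM: "L * sylvester_block G H = \<dots>" .
  have "det L = 1" unfolding L_def
    by (subst det_four_block_mat_lower_left_zero[of _ n _ m]) (use CG in auto)
  moreover have "det (L * sylvester_block G H) = det L * det (sylvester_block G H)"
    by (rule det_mult[OF L]) (use G H in \<open>auto simp: S\<close>)
  moreover have "det (L * sylvester_block G H) = char_poly (G * H)" unfolding LM char_poly_def
    by (subst det_four_block_mat_upper_right_zero[of _ n _ m]) (use CH G H in auto)
  ultimately show ?thesis by simp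
qed

lemma det_sylvester_block_right:
  fixes G :: "'a :: idom mat"
  assumes G: "G \<in> carrier_mat n m" and H: "H \<in> carrier_mat m n"
  shows "[:0,1:] ^ m * det (sylvester_block G H) = [:0,1:] ^ n * char_poly (H * G)"
proof -
  let ?C = "map_mat (\<lambda>a. [:a:])" and ?X = "[:0,1::'a:]"
  have CG: "?C G \<in> carrier_mat n m" and CH: "?C H \<in> carrier_mat m n" using G H by auto
  have S: "sylvester_block G H = four_block_mat (?X \<cdot>\<^sub>m 1\<^sub>m n) (?C G) (?C H) (1\<^sub>m m)"
    using G H by (simp add: sylvester_block_def)
  define L where "L = four_block_mat (1\<^sub>m n) (0\<^sub>m n m) (- ?C H) (?X \<cdot>\<^sub>m 1\<^sub>m m)"
  have L: "L \<in> carrier_mat (n+m) (n+m)" using CH by (simp add: L_def)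
  have "L * sylvester_block G H = four_block_mat (1\<^sub>m n * (?X \<cdot>\<^sub>m 1\<^sub>m n) + 0\<^sub>m n m * ?C H)
      (1\<^sub>m n * ?C G + 0\<^sub>m n m * 1\<^sub>m m) ((- ?C H) * (?X \<cdot>\<^sub>m 1\<^sub>m n) + (?X \<cdot>\<^sub>m 1\<^sub>m m) * ?C H)
      ((- ?C H) * ?C G + (?X \<cdot>\<^sub>m 1\<^sub>m m) * 1\<^sub>m m)"
    unfolding L_def S using G H by (intro mult_four_block_mat) auto
  also have "\<dots> = four_block_mat (?X \<cdot>\<^sub>m 1\<^sub>m n) (?C G) (0\<^sub>m m n) (char_poly_matrix (H * G))"
  proof -
    have XH: "?C H * (?X \<cdot>\<^sub>m 1\<^sub>m n) = ?X \<cdot>\<^sub>m ?C H"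
      "?X \<cdot>\<^sub>m 1\<^sub>m m * ?C H = ?X \<cdot>\<^sub>m ?C H"
      using mult_smult_distrib[OF CH, where k = ?X and B = "1\<^sub>m n" and nc = n]
        mult_smult_assoc_mat[OF _ CH, where k = ?X and A = "1\<^sub>m m" and nr = m] CH by simp_all
    have HG: "- (?C H * ?C G) + ?X \<cdot>\<^sub>m 1\<^sub>m m = ?X \<cdot>\<^sub>m 1\<^sub>m m - ?C H * ?C G"
      by (rule eq_matI) (use G H in auto)
    have Z: "- (?X \<cdot>\<^sub>m ?C H) + ?X \<cdot>\<^sub>m ?C H = 0\<^sub>m m n" using CH by simp
    show ?thesis
      using CG CH G H by (simp add: char_poly_matrix_eq[of "H * G" m] map_poly_mult(1)[OF H G] XH HG Z)
  qed
  finally have LM: "L * sylvester_block G H = \<dots>" .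
  have "det L = ?X ^ m" unfolding L_def
    by (subst det_four_block_mat_upper_right_zero[of _ n _ m]) (use CH in auto)
  moreover have "det (L * sylvester_block G H) = det L * det (sylvester_block G H)"
    by (rule det_mult[OF L]) (use G H in \<open>auto simp: S\<close>)
  moreover have "det (L * sylvester_block G H) = ?X ^ n * char_poly (H * G)" unfolding LM char_poly_def
    by (subst det_four_block_mat_lower_left_zero[of _ n _ m]) (use CG G H in auto)
  ultimately show ?thesis by simp
qed

lemma char_poly_mult_commute:
  fixes G :: "'a :: idom mat"
  assumes "G \<in> carrier_mat n m" and "H \<in> carrier_mat m n"
  shows "[:0,1:] ^ m * char_poly (G * H) = [:0,1:] ^ n * char_poly (H * G)"
  using det_sylvester_block_left[OF assms] det_sylvester_block_right[OF assms] by simp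

section \<open>Entropy as a sum over eigenvalues\<close>

definition xlnx :: "real \<Rightarrow> real" where
  "xlnx r = (if r \<le> 0 then 0 else r * ln r)"

lemma sum_count_eq_sum_mset:
  assumes "finite S" "set_mset M \<subseteq> S"
  shows "(\<Sum>x\<in>S. real (count M x) * g x) = (\<Sum>x\<in>#M. g x)"
  using assms(2)
proof (induction M)
  case (add a M)
  have "(\<Sum>x\<in>S. real (count (add_mset a M) x) * g x)
      = (\<Sum>x\<in>S. real (count M x) * g x + (if x = a then g x else 0))"
    by (intro sum.cong) (auto simp: algebra_simps)
  also have "\<dots> = (\<Sum>x\<in>S. real (count M x) * g x) + g a"
    using add.prems assms(1) by (simp add: sum.distrib)
  finally show ?case using add by simp
qed simp

lemma entropy_eq_sum_proots:
  assumes "\<sigma> \<in> carrier_mat n n"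
  shows "entropy \<sigma> = - (\<Sum>x\<in>#proots (char_poly \<sigma>). xlnx (Re x))"
proof -
  have p: "char_poly \<sigma> \<noteq> 0" using degree_monic_char_poly[OF assms] by auto
  show ?thesis unfolding entropy_def
    using sum_count_eq_sum_mset[of "{x. poly (char_poly \<sigma>) x = 0}" "proots (char_poly \<sigma>)"
        "\<lambda>x. xlnx (Re x)"] poly_roots_finite[OF p] p
    by (simp add: xlnx_def)
qed

lemma proots_prod_linear_factors: "proots (\<Prod>a\<leftarrow>as. [:- a, 1:]) = mset as"
proof (induction as)
  case (Cons a as)
  have "proots (\<Prod>a\<leftarrow>a # as. [:- a, 1:]) = proots [:- a, 1:] + proots (\<Prod>a\<leftarrow>as. [:- a, 1:])"
    unfolding list.map prod_list.Cons by (rule proots_mult) (auto simp: prod_list_zero_iff)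
  also have "\<dots> = {#a#} + mset as" using Cons.IH proots_linear_factor[of "- a"] by simp
  finally show ?case by simp
qed simp

lemma entropy_eq_sum_eigenvalues:
  assumes "\<sigma> \<in> carrier_mat n n" "char_poly \<sigma> = (\<Prod>a\<leftarrow>as. [:- a, 1:])"
  shows "entropy \<sigma> = - (\<Sum>a\<leftarrow>as. xlnx (Re a))"
proof -
  have "(\<Sum>x\<in>#mset as. xlnx (Re x)) = (\<Sum>a\<leftarrow>as. xlnx (Re a))" by (induction as) auto
  with assms show ?thesis by (simp add: entropy_eq_sum_proots proots_prod_linear_factors)
qed

text \<open>\<open>GH\<close> and \<open>HG\<close> only differ in the multiplicity of the eigenvalue \<open>0\<close>, which does
  not contribute to the entropy.\<close>

lemma entropy_mult_commute:
  fixes G :: "complex mat"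
  assumes G: "G \<in> carrier_mat n m" and H: "H \<in> carrier_mat m n"
  shows "entropy (G * H) = entropy (H * G)"
proof -
  have sum_X_power: "(\<Sum>x\<in>#proots ([:0,1:] ^ k * char_poly M). xlnx (Re x))
      = (\<Sum>x\<in>#proots (char_poly M). xlnx (Re x))" if "M \<in> carrier_mat l l" for M :: "complex mat" and k l
  proof -
    have "char_poly M \<noteq> 0" using degree_monic_char_poly[OF that] by auto
    then show ?thesis
      using proots_linear_factor[of "0::complex"] by (simp add: proots_mult proots_power xlnx_def)
  qed
  have "entropy (G * H) = - (\<Sum>x\<in>#proots ([:0,1:] ^ m * char_poly (G * H)). xlnx (Re x))"
    using G H by (simp add: entropy_eq_sum_proots[of _ n] sum_X_power[of _ n])
  also have "\<dots> = entropy (H * G)"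
    using G H by (simp add: char_poly_mult_commute[OF G H] entropy_eq_sum_proots[of _ m] sum_X_power[of _ m])
  finally show ?thesis .
qed

lemma xlnx_ge_minus_one: "xlnx r \<ge> -1"
proof (cases "r \<le> 0")
  case False
  then have "ln (1/r) \<le> 1/r - 1" by (intro ln_le_minus_one) simp
  with False have "r * (- ln r) \<le> r * (1/r - 1)" by (intro mult_left_mono) (simp_all add: ln_div)
  with False show ?thesis by (simp add: xlnx_def algebra_simps)
qed (simp add: xlnx_def)

lemma xlnx_le_two: "r \<le> 2 \<Longrightarrow> xlnx r \<le> 2"
proof (cases "r \<le> 0")
  case False
  assume "r \<le> 2"
  have "r * ln r \<le> r * (r - 1)" using False ln_le_minus_one[of r] by (intro mult_left_mono) auto
  also have "\<dots> \<le> 2"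
  proof -
    have "(r - 2) * (r + 1) \<le> 0" using \<open>r \<le> 2\<close> False by (intro mult_nonpos_nonneg) auto
    then show ?thesis by (simp add: algebra_simps)
  qed
  finally show ?thesis using False by (simp add: xlnx_def)
qed (simp add: xlnx_def)

lemma entropy_le_dim:
  assumes "\<sigma> \<in> carrier_mat n n"
  shows "entropy \<sigma> \<le> real n"
proof -
  have "(\<Sum>x\<in>#proots (char_poly \<sigma>). -1) \<le> (\<Sum>x\<in>#proots (char_poly \<sigma>). xlnx (Re x))"
    using xlnx_ge_minus_one by (intro sum_mset_mono)
  moreover have "size (proots (char_poly \<sigma>)) \<le> n"
    using size_proots_le[of "char_poly \<sigma>"] degree_monic_char_poly[OF assms] by simp
  ultimately show ?thesis by (simp add: entropy_eq_sum_proots[OF assms])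
qed

lemma root_quadratic_bound:
  fixes x d :: complex
  assumes "poly [:d, -1, 1:] x = 0" and "cmod d \<le> 2"
  shows "cmod x \<le> 2"
proof (rule ccontr)
  assume "\<not> cmod x \<le> 2"
  have "x * x = x - d" using assms(1) by (simp add: algebra_simps)
  then have "cmod x * cmod x \<le> cmod x + cmod d" by (metis norm_mult norm_triangle_ineq4)
  moreover have "cmod x * cmod x > 2 * cmod x"
    using \<open>\<not> cmod x \<le> 2\<close> by (intro mult_strict_right_mono) auto
  ultimately show False using \<open>\<not> cmod x \<le> 2\<close> assms(2) by linarith
qed

lemma entropy_2x2_ge:
  assumes M: "M \<in> carrier_mat 2 2" and tr: "M $$ (0,0) + M $$ (1,1) = 1" and "cmod (det M) \<le> 2"
  shows "entropy M \<ge> -4"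
proof -
  have cp: "char_poly M = [:det M, -1, 1:]" unfolding char_poly_2x2[OF M] det_2x2[OF M] tr ..
  have "(\<Sum>x\<in>#proots (char_poly M). xlnx (Re x)) \<le> (\<Sum>x\<in>#proots (char_poly M). 2)"
  proof (intro sum_mset_mono xlnx_le_two)
    fix x assume "x \<in># proots (char_poly M)"
    then have "poly [:det M, -1, 1:] x = 0" unfolding cp by simp
    then have "cmod x \<le> 2" using root_quadratic_bound assms(3) by blast
    then show "Re x \<le> 2" using abs_Re_le_cmod[of x] by linarith
  qed
  also have "\<dots> \<le> 4" using size_proots_le[of "char_poly M"] degree_monic_char_poly[OF M] by simp
  finally show ?thesis by (simp add: entropy_eq_sum_proots[OF M])
qed

section \<open>Estimates for \<open>x ln x\<close>\<close>

lemma xlnx_le_mult_ln: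
  assumes "0 \<le> a" "a \<le> c"
  shows "xlnx a \<le> a * ln c"
proof (cases "a = 0")
  case False
  with assms have "ln a \<le> ln c" by simp
  with False assms show ?thesis by (simp add: xlnx_def mult_left_mono)
qed (simp add: xlnx_def)

lemma xlnx_add_ge:
  assumes "0 \<le> a" "0 \<le> b"
  shows "xlnx a + xlnx b \<le> xlnx (a + b)"
proof (cases "a + b = 0")
  case False
  have "xlnx a + xlnx b \<le> a * ln (a + b) + b * ln (a + b)"
    using assms by (intro add_mono xlnx_le_mult_ln) auto
  with False assms show ?thesis by (simp add: xlnx_def algebra_simps)
qed (use assms in \<open>simp add: xlnx_def\<close>)

lemma xlnx_tangent:
  assumes "0 < x" "0 \<le> y"
  shows "xlnx x + (ln x + 1) * (y - x) \<le> xlnx y"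
proof (cases "y = 0")
  case False
  with assms have "ln (x / y) \<le> x / y - 1" by (intro ln_le_minus_one) simp
  with False assms have "y * ln (x / y) \<le> y * (x / y - 1)" by (intro mult_left_mono) simp_all
  moreover have "y * (x / y - 1) = x - y" and "ln (x / y) = ln x - ln y"
    using False assms by (simp_all add: field_simps ln_div)
  ultimately have "y * (ln x - ln y) \<le> x - y" by simp
  with False assms show ?thesis by (simp add: xlnx_def algebra_simps)
qed (use assms in \<open>simp add: xlnx_def algebra_simps\<close>)

lemma quadratic_split:
  fixes u q :: real
  assumes "0 \<le> u" "0 \<le> q" "4 * q \<le> u\<^sup>2"
  shows "\<exists>r1 r2. r1 + r2 = u \<and> r1 * r2 = q \<and> 0 \<le> r2 \<and> r2 \<le> r1"
proof -
  define D where "D = sqrt (u\<^sup>2 - 4 * q)"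
  have D: "0 \<le> D" "D\<^sup>2 = u\<^sup>2 - 4 * q" using assms by (simp_all add: D_def)
  have "D\<^sup>2 \<le> u\<^sup>2" using D(2) assms(2) by linarith
  then have "D \<le> u" using assms(1) by (rule power2_le_imp_le)
  have "(u + D) / 2 * ((u - D) / 2) = (u\<^sup>2 - D\<^sup>2) / 4" by (simp add: field_simps power2_eq_square)
  then have "(u + D) / 2 * ((u - D) / 2) = q" using D(2) by simp
  show ?thesis
    by (rule exI[of _ "(u + D) / 2"], rule exI[of _ "(u - D) / 2"]) (use \<open>D \<le> u\<close> D(1) \<open>_ = q\<close> in \<open>auto simp: field_simps\<close>)
qed

text \<open>Splitting an eigenvalue \<open>u\<close> into two eigenvalues with small product \<open>q\<close> lowers
  \<open>\<Sum> xlnx\<close> by order \<open>q ln (1/q)\<close>.\<close>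

lemma xlnx_split_gain:
  assumes sum: "r1 + r2 = u" and prod: "r1 * r2 = q" and "0 < q" "0 \<le> r2" "r2 \<le> r1"
  shows "xlnx r1 + xlnx r2 + q / u * ln (u\<^sup>2 / (2 * q)) \<le> xlnx u"
proof -
  have "r2 \<noteq> 0" using prod \<open>0 < q\<close> by auto
  then have r2: "0 < r2" and r1: "0 < r1" using assms by auto
  then have u: "0 < u" using sum by simp
  have "u\<^sup>2 - 4 * q = (r1 - r2)\<^sup>2"
    unfolding sum[symmetric] prod[symmetric] by (simp add: power2_eq_square algebra_simps)
  then have "2 \<le> u\<^sup>2 / (2 * q)" using \<open>0 < q\<close> by (simp add: field_simps)
  then have ln_pos: "0 \<le> ln (u\<^sup>2 / (2 * q))" by simp
  have "q \<le> r2 * u" unfolding prod[symmetric] sum[symmetric] using r1 r2 by (simp add: algebra_simps)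
  then have "q / u \<le> r2" using u by (simp add: divide_le_eq)
  then have "q / u * ln (u\<^sup>2 / (2 * q)) \<le> r2 * ln (u\<^sup>2 / (2 * q))"
    using ln_pos by (rule mult_right_mono)
  also have "\<dots> \<le> r2 * ln (u / r2)"
  proof -
    have "u * u \<le> 2 * r1 * u" using sum \<open>r2 \<le> r1\<close> u by (intro mult_right_mono) auto
    have "u\<^sup>2 / (2 * q) = u * u / (2 * r1 * r2)" unfolding prod[symmetric] by (simp add: power2_eq_square mult.assoc)
    also have "\<dots> \<le> 2 * r1 * u / (2 * r1 * r2)" using \<open>u * u \<le> 2 * r1 * u\<close> r1 r2 by (intro divide_right_mono) auto
    also have "\<dots> = u / r2" using r1 by simp
    finally have "u\<^sup>2 / (2 * q) \<le> u / r2" .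
    then show ?thesis using r2 \<open>0 < q\<close> u by (intro mult_left_mono) simp_all
  qed
  also have "\<dots> = r2 * ln u - xlnx r2" using r2 u by (simp add: xlnx_def ln_div algebra_simps)
  finally have "xlnx r2 + q / u * ln (u\<^sup>2 / (2 * q)) \<le> r2 * ln u" by simp
  moreover have "xlnx r1 \<le> r1 * ln u" using r1 r2 sum by (intro xlnx_le_mult_ln) auto
  moreover have "xlnx u = r1 * ln u + r2 * ln u" using u unfolding sum[symmetric] by (simp add: xlnx_def algebra_simps)
  ultimately show ?thesis by linarith
qed

text \<open>Mixing the eigenvalues \<open>u, v\<close> with weight \<open>\<beta>\<close> raises \<open>\<Sum> xlnx\<close> by at most
  order \<open>\<beta>\<close>, by convexity.\<close>

lemma xlnx_mix_ge:
  assumes u: "0 < u" and v: "0 < v" and "u + v = 1" and \<beta>: "0 \<le> \<beta>" "\<beta> \<le> 1"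
  shows "xlnx u + xlnx v - \<bar>ln u - ln v\<bar> * \<beta>
    \<le> xlnx (u * (1 - \<beta>) + v * \<beta>) + xlnx (u * \<beta> + v * (1 - \<beta>))"
proof -
  have "xlnx u + (ln u + 1) * ((u * (1 - \<beta>) + v * \<beta>) - u) \<le> xlnx (u * (1 - \<beta>) + v * \<beta>)"
    by (rule xlnx_tangent[OF u]) (use u v \<beta> in simp)
  moreover have "xlnx v + (ln v + 1) * ((u * \<beta> + v * (1 - \<beta>)) - v) \<le> xlnx (u * \<beta> + v * (1 - \<beta>))"
    by (rule xlnx_tangent[OF v]) (use u v \<beta> in simp)
  moreover have "(ln u + 1) * ((u * (1 - \<beta>) + v * \<beta>) - u) + (ln v + 1) * ((u * \<beta> + v * (1 - \<beta>)) - v)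
      = (ln u - ln v) * (v - u) * \<beta>"
    by (simp add: algebra_simps)
  moreover have "- (\<bar>ln u - ln v\<bar> * \<beta>) \<le> (ln u - ln v) * (v - u) * \<beta>"
  proof -
    have "\<bar>(ln u - ln v) * (v - u)\<bar> \<le> \<bar>ln u - ln v\<bar> * 1"
      unfolding abs_mult using assms by (intro mult_left_mono) auto
    then have "\<bar>(ln u - ln v) * (v - u) * \<beta>\<bar> \<le> \<bar>ln u - ln v\<bar> * \<beta>"
      using \<beta> by (simp add: abs_mult mult_right_mono)
    then show ?thesis by linarith
  qed
  ultimately show ?thesis by linarith
qed

lemma exists_weight_ln_gt:
  fixes T K :: real
  assumes "0 < T"
  shows "\<exists>\<beta>. 0 < \<beta> \<and> \<beta> \<le> 1/2 \<and> K < ln (T / \<beta>)"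
proof -
  define \<beta> where "\<beta> = min (1/2) (T * exp (- K) / 2)"
  have \<beta>: "0 < \<beta>" "\<beta> \<le> T * exp (- K) / 2" using assms by (auto simp: \<beta>_def)
  then have "2 * exp K \<le> T / \<beta>" by (simp add: field_simps exp_minus)
  then have "ln (2 * exp K) \<le> ln (T / \<beta>)" by (intro ln_mono) auto
  then have "ln 2 + K \<le> ln (T / \<beta>)" by (simp add: ln_mult)
  moreover have "0 < ln (2::real)" by simp
  ultimately have "K < ln (T / \<beta>)" by linarith
  with \<beta> show ?thesis by (intro exI[of _ \<beta>]) (auto simp: \<beta>_def)
qed

text \<open>With \<open>q = s P\<close> and \<open>s = 4\<beta>(1 - \<beta>)\<close>, the gain \<open>\<approx> \<beta> ln(1/\<beta>)\<close> of
  \<open>xlnx_split_gain\<close> beats the linear loss \<open>L \<beta>\<close> of \<open>xlnx_mix_ge\<close> for small \<open>\<beta>\<close>.\<close>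

lemma exists_weight_split_gain_gt:
  fixes u P L :: real
  assumes u: "0 < u" and P: "0 < P" and L: "0 \<le> L"
  shows "\<exists>\<beta>. 0 < \<beta> \<and> \<beta> \<le> 1/2 \<and>
    L * \<beta> < 4 * \<beta> * (1 - \<beta>) * P / u * ln (u\<^sup>2 / (2 * (4 * \<beta> * (1 - \<beta>) * P)))"
proof -
  obtain \<beta> where \<beta>: "0 < \<beta>" "\<beta> \<le> 1/2" and ln_gt: "u * L / (2 * P) < ln (u\<^sup>2 / (8 * P) / \<beta>)"
    using exists_weight_ln_gt[of "u\<^sup>2 / (8 * P)" "u * L / (2 * P)"] u P by auto
  define s where "s = 4 * \<beta> * (1 - \<beta>)"
  have s: "0 < s" "2 * \<beta> \<le> s" "s \<le> 4 * \<beta>" using \<beta> by (auto simp: s_def algebra_simps)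
  then have "u\<^sup>2 / (8 * P) / \<beta> \<le> u\<^sup>2 / (2 * (s * P))"
    using \<beta> P u by (simp add: field_simps mult_left_mono)
  then have "ln (u\<^sup>2 / (8 * P) / \<beta>) \<le> ln (u\<^sup>2 / (2 * (s * P)))" using \<beta> P u by (intro ln_mono) auto
  then have "u * L / (2 * P) < ln (u\<^sup>2 / (2 * (s * P)))" using ln_gt by linarith
  then have "s * P / u * (u * L / (2 * P)) < s * P / u * ln (u\<^sup>2 / (2 * (s * P)))"
    using s P u by (intro mult_strict_left_mono) auto
  moreover have "s * P / u * (u * L / (2 * P)) = L * (s / 2)" using P u by (simp add: field_simps)
  moreover have "L * \<beta> \<le> L * (s / 2)" using s L by (intro mult_left_mono) auto
  ultimately have "L * \<beta> < s * P / u * ln (u\<^sup>2 / (2 * (s * P)))" by linarith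
  with \<beta> show ?thesis unfolding s_def by blast
qed

lemma mixing_gain_pos:
  assumes u: "0 < u" and v: "0 < v" and uv: "u + v = 1"
    and P: "0 < P" "4 * P \<le> u\<^sup>2" and Q: "0 \<le> Q" "4 * Q \<le> v\<^sup>2"
  shows "\<exists>\<beta> r1 r2 r3 r4. 0 \<le> \<beta> \<and> \<beta> \<le> 1
    \<and> r1 + r2 = u \<and> r1 * r2 = 4 * \<beta> * (1 - \<beta>) * P \<and> r3 + r4 = v \<and> r3 * r4 = 4 * \<beta> * (1 - \<beta>) * Q
    \<and> xlnx r1 + xlnx r2 + xlnx r3 + xlnx r4 < xlnx (u * (1 - \<beta>) + v * \<beta>) + xlnx (u * \<beta> + v * (1 - \<beta>))"
proof -
  define L where "L = \<bar>ln u - ln v\<bar>"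
  obtain \<beta> where \<beta>: "0 < \<beta>" "\<beta> \<le> 1/2"
    and dominates: "L * \<beta> < 4 * \<beta> * (1 - \<beta>) * P / u * ln (u\<^sup>2 / (2 * (4 * \<beta> * (1 - \<beta>) * P)))"
    using exists_weight_split_gain_gt[OF u P(1), of L] by (auto simp: L_def)
  define s where "s = 4 * \<beta> * (1 - \<beta>)"
  have "0 < s" using \<beta> by (simp add: s_def)
  have "0 \<le> (2 * \<beta> - 1)\<^sup>2" by simp
  then have "s \<le> 1" by (simp add: s_def power2_eq_square algebra_simps)
  then have "4 * (s * P) \<le> u\<^sup>2" "4 * (s * Q) \<le> v\<^sup>2"
    using P Q mult_right_mono[OF \<open>s \<le> 1\<close>, of P] mult_right_mono[OF \<open>s \<le> 1\<close>, of Q] by linarith+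
  then obtain r1 r2 r3 r4 where r12: "r1 + r2 = u" "r1 * r2 = s * P" "0 \<le> r2" "r2 \<le> r1"
    and r34: "r3 + r4 = v" "r3 * r4 = s * Q" "0 \<le> r4" "r4 \<le> r3"
    using quadratic_split[of u "s * P"] quadratic_split[of v "s * Q"] u v P Q \<open>0 < s\<close> by auto
  define g where "g = s * P / u * ln (u\<^sup>2 / (2 * (s * P)))"
  have "xlnx r1 + xlnx r2 + g \<le> xlnx u"
    unfolding g_def using xlnx_split_gain[OF r12(1,2) _ r12(3,4)] \<open>0 < s\<close> P by simp
  moreover have "xlnx r3 + xlnx r4 \<le> xlnx v" using xlnx_add_ge[of r3 r4] r34 by simp
  moreover have "xlnx u + xlnx v - L * \<beta> \<le> xlnx (u * (1 - \<beta>) + v * \<beta>) + xlnx (u * \<beta> + v * (1 - \<beta>))"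
    unfolding L_def using xlnx_mix_ge[OF u v uv] \<beta> by simp
  moreover have "L * \<beta> < g" using dominates by (simp add: g_def s_def)
  ultimately have total: "xlnx r1 + xlnx r2 + xlnx r3 + xlnx r4
      < xlnx (u * (1 - \<beta>) + v * \<beta>) + xlnx (u * \<beta> + v * (1 - \<beta>))"
    by linarith
  show ?thesis
    by (rule exI[of _ \<beta>], rule exI[of _ r1], rule exI[of _ r2], rule exI[of _ r3], rule exI[of _ r4])
      (use r12(1,2) r34(1,2) \<beta> total in \<open>simp add: s_def\<close>)
qed

lemma mixing_gain:
  assumes u: "0 < u" and v: "0 < v" and uv: "u + v = 1" and P: "0 \<le> P" "4 * P \<le> u\<^sup>2"
    and Q: "0 \<le> Q" "4 * Q \<le> v\<^sup>2" and PQ: "0 < P \<or> 0 < Q"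
  shows "\<exists>\<beta> r1 r2 r3 r4. 0 \<le> \<beta> \<and> \<beta> \<le> 1
    \<and> r1 + r2 = u \<and> r1 * r2 = 4 * \<beta> * (1 - \<beta>) * P \<and> r3 + r4 = v \<and> r3 * r4 = 4 * \<beta> * (1 - \<beta>) * Q
    \<and> xlnx r1 + xlnx r2 + xlnx r3 + xlnx r4 < xlnx (u * (1 - \<beta>) + v * \<beta>) + xlnx (u * \<beta> + v * (1 - \<beta>))"
proof (cases "0 < P")
  case False
  with PQ have "0 < Q" by simp
  moreover have "v + u = 1" using uv by simp
  ultimately obtain \<beta> r1 r2 r3 r4 where "0 \<le> \<beta>" "\<beta> \<le> 1"
    "r1 + r2 = v" "r1 * r2 = 4 * \<beta> * (1 - \<beta>) * Q" "r3 + r4 = u" "r3 * r4 = 4 * \<beta> * (1 - \<beta>) * P"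
    and gain: "xlnx r1 + xlnx r2 + xlnx r3 + xlnx r4 < xlnx (v * (1 - \<beta>) + u * \<beta>) + xlnx (v * \<beta> + u * (1 - \<beta>))"
    using mixing_gain_pos[OF v u _ _ Q(2) P] by blast
  moreover have "xlnx (v * (1 - \<beta>) + u * \<beta>) + xlnx (v * \<beta> + u * (1 - \<beta>))
      = xlnx (u * (1 - \<beta>) + v * \<beta>) + xlnx (u * \<beta> + v * (1 - \<beta>))"
    by (simp add: add.commute)
  ultimately have "xlnx r3 + xlnx r4 + xlnx r1 + xlnx r2
      < xlnx (u * (1 - \<beta>) + v * \<beta>) + xlnx (u * \<beta> + v * (1 - \<beta>))"
    using gain by linarith
  with \<open>0 \<le> \<beta>\<close> \<open>\<beta> \<le> 1\<close> \<open>r1 + r2 = v\<close> \<open>r1 * r2 = 4 * \<beta> * (1 - \<beta>) * Q\<close>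
    \<open>r3 + r4 = u\<close> \<open>r3 * r4 = 4 * \<beta> * (1 - \<beta>) * P\<close> show ?thesis by blast
qed (use mixing_gain_pos[OF u v uv _ P(2) Q] in blast)

section \<open>The Pauli channel\<close>

lemma less_2_cases: "(i :: nat) < 2 \<longleftrightarrow> i = 0 \<or> i = 1" by auto

lemma less_4_cases: "(i :: nat) < 4 \<longleftrightarrow> i = 0 \<or> i = 1 \<or> i = 2 \<or> i = 3" by auto

lemma sum_lessThan_2: "(\<Sum>i<2. f i) = f 0 + f (1 :: nat)"
  by (simp add: numeral_2_eq_2)

lemma sum_upt_2: "(\<Sum>i = 0..<2. f i) = f 0 + f (1 :: nat)"
  by (simp add: numeral_2_eq_2)

lemma sum_upt_4: "(\<Sum>i = 0..<4. f i) = f 0 + f 1 + f 2 + f (3 :: nat)"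
  by (simp add: eval_nat_numeral)

lemma sigma_carrier: "sigma1 \<in> carrier_mat 2 2" "sigma2 \<in> carrier_mat 2 2" "sigma3 \<in> carrier_mat 2 2"
  by (auto simp: sigma1_def sigma2_def sigma3_def mat_of_rows_list_def)

lemma pauli_channel_entries:
  assumes "\<rho> \<in> carrier_mat 2 2"
  shows "pauli_channel p0 p1 p2 p3 \<rho> = mat 2 2 (\<lambda>(i,j).
     if i = j then complex_of_real (p0 + p3) * \<rho> $$ (i,i) + complex_of_real (p1 + p2) * \<rho> $$ (1-i,1-i)
     else complex_of_real (p0 - p3) * \<rho> $$ (i,j) + complex_of_real (p1 - p2) * \<rho> $$ (j,i))"
    (is "_ = ?M")
proof (rule eq_matI)
  fix i j assume "i < dim_row ?M" "j < dim_col ?M"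
  with assms show "pauli_channel p0 p1 p2 p3 \<rho> $$ (i,j) = ?M $$ (i,j)"
    by (auto simp: pauli_channel_def less_2_cases scalar_prod_def sum_upt_2 sigma_carrier
        sigma1_def sigma2_def sigma3_def mat_of_rows_list_def algebra_simps)
qed (use assms sigma_carrier in \<open>auto simp: pauli_channel_def\<close>)

lemma pauli_channel_carrier: "\<rho> \<in> carrier_mat 2 2 \<Longrightarrow> pauli_channel p0 p1 p2 p3 \<rho> \<in> carrier_mat 2 2"
  by (simp add: pauli_channel_entries)

lemma density_psd: "density n \<rho> \<Longrightarrow> 0 \<le> Re (\<Sum>i<n. \<Sum>j<n. cnj (v i) * \<rho> $$ (i,j) * v j)"
  unfolding density_def by blast

lemma density_hermitian:
  assumes "density n \<rho>" "i < n" "j < n"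
  shows "cnj (\<rho> $$ (j,i)) = \<rho> $$ (i,j)"
proof -
  have c: "\<rho> \<in> carrier_mat n n" and adj: "adj \<rho> = \<rho>" using assms(1) unfolding density_def by blast+
  have "adj \<rho> $$ (i,j) = \<rho> $$ (i,j)" by (simp add: adj)
  then show ?thesis using c assms(2,3) by (simp add: adj_def)
qed

lemma density_2_diag:
  assumes "density 2 \<rho>" "i < 2"
  shows "Im (\<rho> $$ (i,i)) = 0" "0 \<le> Re (\<rho> $$ (i,i))"
proof -
  show "Im (\<rho> $$ (i,i)) = 0" using arg_cong[OF density_hermitian[OF assms assms(2)], of Im] by simp
  have "0 \<le> Re (\<Sum>k<2. \<Sum>l<2. cnj (if k = i then 1 else 0) * \<rho> $$ (k,l) * (if l = i then 1 else 0))"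
    using density_psd[OF assms(1), of "\<lambda>k. if k = i then 1 else 0"] by simp
  then show "0 \<le> Re (\<rho> $$ (i,i))" using assms(2) by (auto simp: sum_lessThan_2 less_2_cases)
qed

lemma density_2_trace:
  assumes "density 2 \<rho>"
  shows "\<rho> $$ (0,0) + \<rho> $$ (1,1) = 1"
proof -
  have "\<rho> \<in> carrier_mat 2 2" "tr \<rho> = 1" using assms unfolding density_def by blast+
  then show ?thesis by (simp add: tr_def sum_lessThan_2)
qed

lemma density_2_entries:
  assumes "density 2 \<rho>"
  shows "cmod (\<rho> $$ (0,0)) \<le> 1" "cmod (\<rho> $$ (1,1)) \<le> 1" "cmod (\<rho> $$ (0,1)) \<le> 1"
    "cmod (\<rho> $$ (1,0)) \<le> 1"
proof -
  note diag = density_2_diag[OF assms, of 0] density_2_diag[OF assms, of 1]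
  have rs: "Re (\<rho> $$ (0,0)) + Re (\<rho> $$ (1,1)) = 1" using arg_cong[OF density_2_trace[OF assms], of Re] by simp
  show "cmod (\<rho> $$ (0,0)) \<le> 1" "cmod (\<rho> $$ (1,1)) \<le> 1"
    using diag rs by (simp_all add: cmod_def)
  define b where "b = \<rho> $$ (0,1)"
  have b10: "\<rho> $$ (1,0) = cnj b" using arg_cong[OF density_hermitian[OF assms, of 0 1], of cnj] by (simp add: b_def)
  text \<open>Positivity on the vector \<open>(1, -b\<^sup>*)\<close> gives \<open>|b|\<^sup>2 (2 - \<rho>\<^sub>1\<^sub>1) \<le> \<rho>\<^sub>0\<^sub>0\<close>.\<close>
  have "0 \<le> Re (\<Sum>i<2. \<Sum>j<2. cnj ((\<lambda>i. if i = 0 then 1 else - cnj b) i) * \<rho> $$ (i,j)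
      * (\<lambda>i. if i = 0 then 1 else - cnj b) j)"
    using density_psd[OF assms, of "\<lambda>i. if i = 0 then 1 else - cnj b"] by simp
  also have "\<dots> = Re (\<rho> $$ (0,0)) - 2 * (cmod b)\<^sup>2 + Re (\<rho> $$ (1,1)) * (cmod b)\<^sup>2"
  proof -
    have "\<rho> $$ (Suc 0, 0) = cnj b" "\<rho> $$ (0, Suc 0) = b" "Im (\<rho> $$ (Suc 0, Suc 0)) = 0"
      using b10 diag by (auto simp: b_def)
    moreover have "cmod b * cmod b = Re b * Re b + Im b * Im b"
      using cmod_power2[of b] by (simp add: power2_eq_square)
    ultimately show ?thesis by (simp add: sum_lessThan_2 power2_eq_square algebra_simps)
  qed
  finally have "(cmod b)\<^sup>2 * (2 - Re (\<rho> $$ (1,1))) \<le> Re (\<rho> $$ (0,0))" by (simp add: algebra_simps)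
  moreover have "(cmod b)\<^sup>2 * 1 \<le> (cmod b)\<^sup>2 * (2 - Re (\<rho> $$ (1,1)))"
    using diag rs by (intro mult_left_mono) auto
  ultimately have "(cmod b)\<^sup>2 \<le> 1" using diag rs by simp
  then have "cmod b \<le> 1" by (simp add: power_le_one_iff abs_le_square_iff)
  then show "cmod (\<rho> $$ (0,1)) \<le> 1" "cmod (\<rho> $$ (1,0)) \<le> 1" unfolding b10 by (simp_all add: b_def)
qed

lemma cmod_real_comb_le:
  assumes "cmod z \<le> 1" "cmod w \<le> 1"
  shows "cmod (complex_of_real a * z + complex_of_real b * w) \<le> \<bar>a\<bar> + \<bar>b\<bar>"
proof -
  have "cmod (complex_of_real a * z + complex_of_real b * w) \<le> \<bar>a\<bar> * cmod z + \<bar>b\<bar> * cmod w"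
    using norm_triangle_ineq[of "complex_of_real a * z" "complex_of_real b * w"] by (simp add: norm_mult)
  also have "\<dots> \<le> \<bar>a\<bar> * 1 + \<bar>b\<bar> * 1" using assms by (intro add_mono mult_left_mono) auto
  finally show ?thesis by simp
qed

lemma entropy_pauli_channel_ge:
  assumes \<rho>: "density 2 \<rho>" and p: "p0 \<ge> 0" "p1 \<ge> 0" "p2 \<ge> 0" "p3 \<ge> 0" "p0 + p1 + p2 + p3 = 1"
  shows "entropy (pauli_channel p0 p1 p2 p3 \<rho>) \<ge> -4"
proof -
  note bounds = density_2_entries[OF \<rho>]
  have c: "\<rho> \<in> carrier_mat 2 2" using \<rho> by (simp add: density_def)
  let ?M = "pauli_channel p0 p1 p2 p3 \<rho>"
  have entries: "cmod (?M $$ (i,j)) \<le> 1" if "i < 2" "j < 2" for i j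
    using that bounds p unfolding less_2_cases
    by (auto simp: pauli_channel_entries[OF c] simp del: of_real_add of_real_diff
        intro!: order.trans[OF cmod_real_comb_le])
  have "cmod (det ?M) \<le> cmod (?M $$ (0,0)) * cmod (?M $$ (1,1)) + cmod (?M $$ (0,1)) * cmod (?M $$ (1,0))"
    unfolding det_2x2[OF pauli_channel_carrier[OF c]] by (metis norm_mult norm_triangle_ineq4)
  also have "\<dots> \<le> 1 * 1 + 1 * 1" using entries by (intro add_mono mult_mono) auto
  finally have "cmod (det ?M) \<le> 2" by simp
  moreover have "?M $$ (0,0) + ?M $$ (1,1) = complex_of_real (p0 + p1 + p2 + p3) * (\<rho> $$ (0,0) + \<rho> $$ (1,1))"
    by (simp add: pauli_channel_entries[OF c] algebra_simps)
  ultimately show ?thesis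
    using entropy_2x2_ge[OF pauli_channel_carrier[OF c]] density_2_trace[OF \<rho>] p(5) by simp
qed

definition diag2 :: "real \<Rightarrow> real \<Rightarrow> complex mat" where
  "diag2 a b = mat 2 2 (\<lambda>(i,j). if i \<noteq> j then 0 else if i = 0 then complex_of_real a else complex_of_real b)"

lemma diag2_carrier [simp]: "diag2 a b \<in> carrier_mat 2 2"
  by (simp add: diag2_def)

lemma density_diag2:
  assumes "0 \<le> a" "0 \<le> b" "a + b = 1"
  shows "density 2 (diag2 a b)"
  unfolding density_def
proof (intro conjI allI)
  show "adj (diag2 a b) = diag2 a b" by (rule eq_matI) (auto simp: adj_def diag2_def)
  show "tr (diag2 a b) = 1" using assms by (simp add: tr_def diag2_def sum_lessThan_2 flip: of_real_add)
  fix v :: "nat \<Rightarrow> complex"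
  have cmod_sq: "cmod z * cmod z = Re z * Re z + Im z * Im z" for z
    using cmod_power2[of z] by (simp add: power2_eq_square)
  have "Re (\<Sum>i<2. \<Sum>j<2. cnj (v i) * diag2 a b $$ (i,j) * v j) = a * (cmod (v 0))\<^sup>2 + b * (cmod (v 1))\<^sup>2"
    by (simp add: sum_lessThan_2 diag2_def algebra_simps power2_eq_square cmod_sq)
  also have "\<dots> \<ge> 0" using assms by simp
  finally show "0 \<le> Re (\<Sum>i<2. \<Sum>j<2. cnj (v i) * diag2 a b $$ (i,j) * v j)" .
qed simp

lemma quadratic_linear_factors: "[:r1 * r2, - (r1 + r2), 1:] = [:- r1, 1:] * [:- (r2 :: 'a :: comm_ring_1), 1:]"
  by (simp add: algebra_simps)

lemma entropy_pauli_channel_diag: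
  "entropy (pauli_channel p0 p1 p2 p3 (diag2 a b))
     = - (xlnx ((p0 + p3) * a + (p1 + p2) * b) + xlnx ((p0 + p3) * b + (p1 + p2) * a))"
proof -
  let ?x = "(p0 + p3) * a + (p1 + p2) * b" and ?y = "(p0 + p3) * b + (p1 + p2) * a"
  have c: "pauli_channel p0 p1 p2 p3 (diag2 a b) \<in> carrier_mat 2 2" by (simp add: pauli_channel_carrier)
  have "char_poly (pauli_channel p0 p1 p2 p3 (diag2 a b))
      = [:complex_of_real ?x * complex_of_real ?y, - (complex_of_real ?x + complex_of_real ?y), 1:]"
    by (subst char_poly_2x2[OF c]) (simp add: pauli_channel_entries diag2_def)
  also have "\<dots> = (\<Prod>z\<leftarrow>[complex_of_real ?x, complex_of_real ?y]. [:- z, 1:])"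
    by (simp only: quadratic_linear_factors) simp
  finally have "char_poly (pauli_channel p0 p1 p2 p3 (diag2 a b))
      = (\<Prod>z\<leftarrow>[complex_of_real ?x, complex_of_real ?y]. [:- z, 1:])" .
  from entropy_eq_sum_eigenvalues[OF c this] show ?thesis by simp
qed

section \<open>The complementary channel\<close>

text \<open>For an isometry \<open>A\<close> with \<open>e \<times> 2\<close> blocks \<open>A\<^sub>0, A\<^sub>1\<close>, the complementary output is
  \<open>\<Psi>(\<rho>) = A\<^sub>0 \<rho> A\<^sub>0\<^sup>* + A\<^sub>1 \<rho> A\<^sub>1\<^sup>* = G (1 \<otimes> \<rho>) G\<^sup>*\<close> with \<open>G = [A\<^sub>0 | A\<^sub>1]\<close>.
  A column \<open>c < 4\<close> of \<open>G\<close> stands for the column \<open>column_of c\<close> of the block \<open>block_of c\<close>, in the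
  order (0,0), (1,1), (0,1), (1,0): grouping the pairs by parity makes \<open>G\<^sup>* G\<close> block diagonal.\<close>

definition block_of :: "nat \<Rightarrow> nat" where
  "block_of c = c mod 2"

definition column_of :: "nat \<Rightarrow> nat" where
  "column_of c = (if c = 1 \<or> c = 2 then 1 else 0)"

definition env_factor :: "nat \<Rightarrow> complex mat \<Rightarrow> complex mat" where
  "env_factor e A = mat e 4 (\<lambda>(k,c). A $$ (block_of c * e + k, column_of c))"

definition block_copies :: "complex mat \<Rightarrow> complex mat" where
  "block_copies \<rho> = mat 4 4 (\<lambda>(c,d). if block_of c = block_of d then \<rho> $$ (column_of c, column_of d) else 0)"

definition pauli_gram :: "real \<Rightarrow> real \<Rightarrow> real \<Rightarrow> real \<Rightarrow> complex mat" where
  "pauli_gram p0 p1 p2 p3 = mat 4 4 (\<lambda>(c,d).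
     if c < 2 \<and> d < 2 then complex_of_real (if c = d then p0 + p3 else p0 - p3)
     else if 2 \<le> c \<and> 2 \<le> d then complex_of_real (if c = d then p1 + p2 else p1 - p2) else 0)"

lemma ptrace_B_eq_env_factor:
  assumes A: "A \<in> carrier_mat (2 * e) 2" and \<rho>: "\<rho> \<in> carrier_mat 2 2"
  shows "ptrace_B 2 e (A * \<rho> * adj A) = env_factor e A * (block_copies \<rho> * adj (env_factor e A))"
proof (rule eq_matI)
  fix k l assume "k < dim_row (env_factor e A * (block_copies \<rho> * adj (env_factor e A)))"
    and "l < dim_col (env_factor e A * (block_copies \<rho> * adj (env_factor e A)))"
  then have kl: "k < e" "l < e" by (auto simp: env_factor_def adj_def block_copies_def)
  then have "e + k < 2 * e" "e + l < 2 * e" "k < 2 * e" "l < 2 * e" by auto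
  with A \<rho> kl show "ptrace_B 2 e (A * \<rho> * adj A) $$ (k, l)
      = (env_factor e A * (block_copies \<rho> * adj (env_factor e A))) $$ (k, l)"
    by (simp add: ptrace_B_def env_factor_def block_copies_def adj_def scalar_prod_def sum_lessThan_2
        sum_upt_2 sum_upt_4 block_of_def column_of_def algebra_simps)
qed (auto simp: ptrace_B_def env_factor_def block_copies_def adj_def)

definition unit_mat2 :: "nat \<Rightarrow> nat \<Rightarrow> complex mat" where
  "unit_mat2 a b = mat 2 2 (\<lambda>(x,y). if x = a \<and> y = b then 1 else 0)"

lemma unit_mat2_carrier [simp]: "unit_mat2 a b \<in> carrier_mat 2 2"
  by (simp add: unit_mat2_def)

lemma ptrace_E_unit_mat2:
  assumes A: "A \<in> carrier_mat (2 * e) 2" and "i < 2" "j < 2" "a < 2" "b < 2"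
  shows "ptrace_E 2 e (A * unit_mat2 a b * adj A) $$ (i,j) = (\<Sum>k<e. A $$ (i*e+k, a) * cnj (A $$ (j*e+k, b)))"
  unfolding ptrace_E_def using assms(2-)
proof (simp, intro sum.cong refl)
  fix k assume "k \<in> {..<e}"
  then have "i * e + k < 2 * e" "j * e + k < 2 * e" using assms(2,3) by (auto simp: less_2_cases)
  then show "(A * unit_mat2 a b * adj A) $$ (i * e + k, j * e + k) = A $$ (i * e + k, a) * cnj (A $$ (j * e + k, b))"
    using A assms(4,5) less_2_cases[of a] less_2_cases[of b]
    by (auto simp: unit_mat2_def adj_def scalar_prod_def sum_upt_2)
qed

text \<open>The Gram matrix of \<open>G\<close> collects the matrix entries \<open>\<Theta>(|a\<rangle>\<langle>b|)\<^sub>i\<^sub>j\<close>, hence does not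
  depend on the chosen isometry.\<close>

lemma env_factor_gram:
  assumes A: "A \<in> carrier_mat (2 * e) 2"
    and \<Theta>: "\<forall>\<rho> \<in> carrier_mat 2 2. pauli_channel p0 p1 p2 p3 \<rho> = ptrace_E 2 e (A * \<rho> * adj A)"
  shows "adj (env_factor e A) * env_factor e A = pauli_gram p0 p1 p2 p3"
proof (rule eq_matI)
  fix c d assume "c < dim_row (pauli_gram p0 p1 p2 p3)" "d < dim_col (pauli_gram p0 p1 p2 p3)"
  then have c: "c < 4" and d: "d < 4" by (auto simp: pauli_gram_def)
  have cd: "block_of c < 2" "column_of c < 2" "block_of d < 2" "column_of d < 2"
    by (auto simp: block_of_def column_of_def)
  have "(adj (env_factor e A) * env_factor e A) $$ (c,d)
      = cnj (\<Sum>k<e. A $$ (block_of c * e + k, column_of c) * cnj (A $$ (block_of d * e + k, column_of d)))"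
    using c d by (simp add: adj_def env_factor_def scalar_prod_def atLeast0LessThan)
  also have "\<dots> = cnj (pauli_channel p0 p1 p2 p3 (unit_mat2 (column_of c) (column_of d)) $$ (block_of c, block_of d))"
    using \<Theta> ptrace_E_unit_mat2[OF A cd(1,3,2,4)] by simp
  also have "\<dots> = pauli_gram p0 p1 p2 p3 $$ (c,d)"
    using c d unfolding less_4_cases pauli_channel_entries[OF unit_mat2_carrier]
    by (elim disjE; simp add: unit_mat2_def pauli_gram_def block_of_def column_of_def)
  finally show "(adj (env_factor e A) * env_factor e A) $$ (c,d) = pauli_gram p0 p1 p2 p3 $$ (c,d)" .
qed (auto simp: adj_def env_factor_def pauli_gram_def)

definition pauli_block :: "real \<Rightarrow> real \<Rightarrow> real \<Rightarrow> real \<Rightarrow> complex mat" where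
  "pauli_block a b x y = mat 2 2 (\<lambda>(i,j).
     complex_of_real ((if i = 0 then a else b) * (if i = j then x + y else x - y)))"

lemma pauli_block_carrier [simp]: "pauli_block a b x y \<in> carrier_mat 2 2"
  by (simp add: pauli_block_def)

lemma block_copies_diag2_mult_pauli_gram:
  "block_copies (diag2 a b) * pauli_gram p0 p1 p2 p3
     = four_block_mat (pauli_block a b p0 p3) (0\<^sub>m 2 2) (0\<^sub>m 2 2) (pauli_block b a p1 p2)"
proof (rule eq_matI)
  fix i j assume "i < dim_row (four_block_mat (pauli_block a b p0 p3) (0\<^sub>m 2 2) (0\<^sub>m 2 2) (pauli_block b a p1 p2))"
    "j < dim_col (four_block_mat (pauli_block a b p0 p3) (0\<^sub>m 2 2) (0\<^sub>m 2 2) (pauli_block b a p1 p2))"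
  then have "i < 4" "j < 4" by (auto simp: pauli_block_def)
  then show "(block_copies (diag2 a b) * pauli_gram p0 p1 p2 p3) $$ (i,j)
      = four_block_mat (pauli_block a b p0 p3) (0\<^sub>m 2 2) (0\<^sub>m 2 2) (pauli_block b a p1 p2) $$ (i,j)"
    unfolding less_4_cases
    by (elim disjE; simp add: block_copies_def pauli_gram_def diag2_def pauli_block_def scalar_prod_def
        sum_upt_4 block_of_def column_of_def)
qed (auto simp: block_copies_def pauli_gram_def pauli_block_def)

lemma char_poly_pauli_block:
  assumes "r1 + r2 = (a + b) * (x + y)" "r1 * r2 = 4 * a * b * x * y"
  shows "char_poly (pauli_block a b x y) = [:- complex_of_real r1, 1:] * [:- complex_of_real r2, 1:]"
proof -
  have "char_poly (pauli_block a b x y)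
      = [:complex_of_real (r1 * r2), - complex_of_real (r1 + r2), 1:]"
    using assms by (subst char_poly_2x2) (auto simp: pauli_block_def algebra_simps)
  then show ?thesis by (simp add: quadratic_linear_factors[symmetric])
qed

lemma entropy_complementary_diag2:
  assumes "complementary 2 2 e (pauli_channel p0 p1 p2 p3) \<Psi>"
    and "r1 + r2 = (a + b) * (p0 + p3)" "r1 * r2 = 4 * a * b * p0 * p3"
    and "r3 + r4 = (a + b) * (p1 + p2)" "r3 * r4 = 4 * a * b * p1 * p2"
  shows "entropy (\<Psi> (diag2 a b)) = - (xlnx r1 + xlnx r2 + xlnx r3 + xlnx r4)"
proof -
  obtain A where A: "A \<in> carrier_mat (2 * e) 2"
    and rel: "\<forall>\<rho> \<in> carrier_mat 2 2. pauli_channel p0 p1 p2 p3 \<rho> = ptrace_E 2 e (A * \<rho> * adj A)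
       \<and> \<Psi> \<rho> = ptrace_B 2 e (A * \<rho> * adj A)"
    using assms(1) unfolding complementary_def by auto
  let ?G = "env_factor e A" and ?R = "block_copies (diag2 a b)"
  have G: "?G \<in> carrier_mat e 4" and R: "?R \<in> carrier_mat 4 4" and G': "adj ?G \<in> carrier_mat 4 e"
    by (simp_all add: env_factor_def block_copies_def adj_def)
  have "\<Psi> (diag2 a b) = ?G * (?R * adj ?G)" using rel ptrace_B_eq_env_factor[OF A] by simp
  then have "entropy (\<Psi> (diag2 a b)) = entropy (?R * adj ?G * ?G)"
    using entropy_mult_commute[OF G, of "?R * adj ?G"] R G' by simp
  also have "?R * adj ?G * ?G = ?R * pauli_gram p0 p1 p2 p3"
  proof -
    have "\<forall>\<rho> \<in> carrier_mat 2 2. pauli_channel p0 p1 p2 p3 \<rho> = ptrace_E 2 e (A * \<rho> * adj A)"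
      using rel by blast
    then show ?thesis using assoc_mult_mat[OF R G' G] env_factor_gram[OF A] by simp
  qed
  also have "\<dots> = four_block_mat (pauli_block a b p0 p3) (0\<^sub>m 2 2) (0\<^sub>m 2 2) (pauli_block b a p1 p2)"
    by (rule block_copies_diag2_mult_pauli_gram)
  also have "entropy \<dots> = - (xlnx r1 + xlnx r2 + xlnx r3 + xlnx r4)"
  proof (rule trans[OF entropy_eq_sum_eigenvalues[of _ 4]])
    show "four_block_mat (pauli_block a b p0 p3) (0\<^sub>m 2 2) (0\<^sub>m 2 2) (pauli_block b a p1 p2) \<in> carrier_mat 4 4"
      using four_block_carrier_mat[OF pauli_block_carrier pauli_block_carrier] by simp
    show "char_poly (four_block_mat (pauli_block a b p0 p3) (0\<^sub>m 2 2) (0\<^sub>m 2 2) (pauli_block b a p1 p2))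
      = (\<Prod>z\<leftarrow>map complex_of_real [r1, r2, r3, r4]. [:- z, 1:])"
      using char_poly_pauli_block[of r1 r2 a b p0 p3] char_poly_pauli_block[of r3 r4 b a p1 p2] assms(2-)
      by (subst char_poly_four_block_diag) (auto simp: pauli_block_def algebra_simps)
  qed simp
  finally show ?thesis .
qed

section \<open>Positive coherent information\<close>

lemma coh_info_state_bdd_above:
  assumes "complementary 2 2 e (pauli_channel p0 p1 p2 p3) \<Psi>"
    and "p0 \<ge> 0" "p1 \<ge> 0" "p2 \<ge> 0" "p3 \<ge> 0" "p0 + p1 + p2 + p3 = 1"
  shows "bdd_above (coh_info_state (pauli_channel p0 p1 p2 p3) \<Psi> ` {\<rho>. density 2 \<rho>})"
proof (rule bdd_aboveI2)
  fix \<rho> assume "\<rho> \<in> {\<rho>. density 2 \<rho>}"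
  then have \<rho>: "density 2 \<rho>" "\<rho> \<in> carrier_mat 2 2" by (simp_all add: density_def)
  obtain A where "\<Psi> \<rho> = ptrace_B 2 e (A * \<rho> * adj A)"
    using assms(1) \<rho>(2) unfolding complementary_def by blast
  then have "entropy (\<Psi> \<rho>) \<le> real e" by (intro entropy_le_dim) (simp add: ptrace_B_def)
  with entropy_pauli_channel_ge[OF \<rho>(1) assms(2-)]
  show "coh_info_state (pauli_channel p0 p1 p2 p3) \<Psi> \<rho> \<le> real e + 4"
    unfolding coh_info_state_def by linarith
qed

lemma pauli_weights_three_nonzero:
  fixes p0 p1 p2 p3 :: real
  assumes "p0 \<ge> 0" "p1 \<ge> 0" "p2 \<ge> 0" "p3 \<ge> 0"
    and "length (filter (\<lambda>x. x \<noteq> 0) [p0, p1, p2, p3]) \<ge> 3"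
  shows "0 < p0 + p3" "0 < p1 + p2" "0 < p0 * p3 \<or> 0 < p1 * p2"
  using assms by (auto split: if_splits simp: order.order_iff_strict)

lemma exists_density_coh_info_pos:
  assumes \<Psi>: "complementary 2 2 e (pauli_channel p0 p1 p2 p3) \<Psi>"
    and p: "p0 \<ge> 0" "p1 \<ge> 0" "p2 \<ge> 0" "p3 \<ge> 0" "p0 + p1 + p2 + p3 = 1"
    and three: "length (filter (\<lambda>x. x \<noteq> 0) [p0, p1, p2, p3]) \<ge> 3"
  shows "\<exists>\<rho>. density 2 \<rho> \<and> coh_info_state (pauli_channel p0 p1 p2 p3) \<Psi> \<rho> > 0"
proof -
  have "4 * (p0 * p3) \<le> (p0 + p3)\<^sup>2" "4 * (p1 * p2) \<le> (p1 + p2)\<^sup>2"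
    using sum_squares_ge_zero[of "p0 - p3" 0] sum_squares_ge_zero[of "p1 - p2" 0]
    by (simp_all add: power2_eq_square algebra_simps)
  then obtain \<beta> r1 r2 r3 r4 where \<beta>: "0 \<le> \<beta>" "\<beta> \<le> 1"
    and r: "r1 + r2 = p0 + p3" "r1 * r2 = 4 * \<beta> * (1 - \<beta>) * (p0 * p3)"
      "r3 + r4 = p1 + p2" "r3 * r4 = 4 * \<beta> * (1 - \<beta>) * (p1 * p2)"
    and gain: "xlnx r1 + xlnx r2 + xlnx r3 + xlnx r4 < xlnx ((p0 + p3) * (1 - \<beta>) + (p1 + p2) * \<beta>)
      + xlnx ((p0 + p3) * \<beta> + (p1 + p2) * (1 - \<beta>))"
    using mixing_gain[of "p0 + p3" "p1 + p2" "p0 * p3" "p1 * p2"] pauli_weights_three_nonzero[OF p(1-4) three] p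
    by (auto simp: algebra_simps)
  have "entropy (\<Psi> (diag2 (1 - \<beta>) \<beta>)) = - (xlnx r1 + xlnx r2 + xlnx r3 + xlnx r4)"
    using entropy_complementary_diag2[OF \<Psi>] r by (simp add: algebra_simps)
  moreover have "density 2 (diag2 (1 - \<beta>) \<beta>)" using \<beta> by (intro density_diag2) auto
  ultimately show ?thesis
    using gain by (auto simp: coh_info_state_def entropy_pauli_channel_diag)
qed

theorem theorem2:
  fixes p0 p1 p2 p3 :: real and e :: nat and \<Psi> :: "complex mat \<Rightarrow> complex mat"
  assumes "p0 \<ge> 0" "p1 \<ge> 0" "p2 \<ge> 0" "p3 \<ge> 0" "p0 + p1 + p2 + p3 = 1"
    and "length (filter (\<lambda>x. x \<noteq> 0) [p0, p1, p2, p3]) \<ge> 3"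
    and "complementary 2 2 e (pauli_channel p0 p1 p2 p3) \<Psi>"
  shows "coh_info 2 (pauli_channel p0 p1 p2 p3) \<Psi> > 0"
proof -
  obtain \<rho> where "density 2 \<rho>" and pos: "coh_info_state (pauli_channel p0 p1 p2 p3) \<Psi> \<rho> > 0"
    using exists_density_coh_info_pos[OF assms(7,1-6)] by blast
  then have "coh_info_state (pauli_channel p0 p1 p2 p3) \<Psi> \<rho> \<le> coh_info 2 (pauli_channel p0 p1 p2 p3) \<Psi>"
    unfolding coh_info_def by (intro cSup_upper coh_info_state_bdd_above[OF assms(7,1-5)]) simp
  with pos show ?thesis by linarith
qed

end
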